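(* Let $X$ be a transitive BE-algebra, $k\in(-1,0]$, and $(X,f)$ an $N$-structure on $X$. For $t\in[-1,0)$ let $[f]_t=\{x\in X: f(x)\le t\}\cup\{x\in X: f(x)+t+k+1\le 0\}$. Then $(X,f)$ is an $([e],[e]\vee[c_k])$-ideal of $X$ if and only if for every $t\in[-1,0)$ the set $[f]_t$ is either empty or an ideal of $X$.
   Context: A BE-algebra is a set $X$ with a binary operation $*$ and a distinguished element $1$ such that for all $x,y,z\in X$: $x*x=1$, $x*1=1$, $1*x=x$, and $x*(y*z)=y*(x*z)$. Write $x\le y$ iff $x*y=1$. A BE-algebra is transitive if $y*z\le(x*y)*(x*z)$ for all $x,y,z\in X$. An ideal of $X$ is a nonempty subset $I\subseteq X$ such that $x*s\in I$ for all $x\in X$, $s\in I$, and $(s*(q*x))*x\in I$ for all $x\in X$ and $s,q\in I$. An $N$-structure on $X$ is a pair $(X,f)$ where $f:X\to[-1,0]$ is any function. Fix $k\in(-1,0]$. For $x\in X$ and $t\in[-1,0)$, write $\frac{x}{t}[e]f$ if $f(x)\le t$, and $\frac{x}{t}[c_k]f$ if $f(x)+t+k+1<0$; write $\frac{x}{t}([e]\vee[c_k])f$ if at least one of these holds. The $N$-structure $(X,f)$ is an $([e],[e]\vee[c_k])$-ideal of $X$ if for all $x,y,z\in X$ and all $t,r\in[-1,0)$: (i) $f(y)\le t$ implies $\frac{x*y}{t}([e]\vee[c_k])f$; (ii) $f(x)\le t$ and $f(y)\le r$ together imply $\frac{(x*(y*z))*z}{\max\{t,r\}}([e]\vee[c_k])f$.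 *)

theory Defs
  imports Complex_Main
begin

definition BE_algebra :: "('a \<Rightarrow> 'a \<Rightarrow> 'a) \<Rightarrow> 'a \<Rightarrow> bool" where
  "BE_algebra m one \<longleftrightarrow>
     (\<forall>x. m x x = one) \<and> (\<forall>x. m x one = one) \<and> (\<forall>x. m one x = x) \<and>
     (\<forall>x y z. m x (m y z) = m y (m x z))"

definition BE_le :: "('a \<Rightarrow> 'a \<Rightarrow> 'a) \<Rightarrow> 'a \<Rightarrow> 'a \<Rightarrow> 'a \<Rightarrow> bool" where
  "BE_le m one x y \<longleftrightarrow> m x y = one"

definition transitive_BE :: "('a \<Rightarrow> 'a \<Rightarrow> 'a) \<Rightarrow> 'a \<Rightarrow> bool" where
  "transitive_BE m one \<longleftrightarrow> BE_algebra m one \<and>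
     (\<forall>x y z. BE_le m one (m y z) (m (m x y) (m x z)))"

definition BE_ideal :: "('a \<Rightarrow> 'a \<Rightarrow> 'a) \<Rightarrow> 'a set \<Rightarrow> bool" where
  "BE_ideal m I \<longleftrightarrow> I \<noteq> {} \<and>
     (\<forall>x s. s \<in> I \<longrightarrow> m x s \<in> I) \<and>
     (\<forall>x s q. s \<in> I \<longrightarrow> q \<in> I \<longrightarrow> m (m s (m q x)) x \<in> I)"

definition N_structure :: "('a \<Rightarrow> real) \<Rightarrow> bool" where
  "N_structure f \<longleftrightarrow> (\<forall>x. f x \<in> {-1..0})"

definition in_e :: "('a \<Rightarrow> real) \<Rightarrow> 'a \<Rightarrow> real \<Rightarrow> bool" where
  "in_e f x t \<longleftrightarrow> f x \<le> t"

definition in_ck :: "real \<Rightarrow> ('a \<Rightarrow> real) \<Rightarrow> 'a \<Rightarrow> real \<Rightarrow> bool" where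
  "in_ck k f x t \<longleftrightarrow> f x + t + k + 1 < 0"

definition in_e_or_ck :: "real \<Rightarrow> ('a \<Rightarrow> real) \<Rightarrow> 'a \<Rightarrow> real \<Rightarrow> bool" where
  "in_e_or_ck k f x t \<longleftrightarrow> in_e f x t \<or> in_ck k f x t"

definition e_eck_ideal :: "('a \<Rightarrow> 'a \<Rightarrow> 'a) \<Rightarrow> real \<Rightarrow> ('a \<Rightarrow> real) \<Rightarrow> bool" where
  "e_eck_ideal m k f \<longleftrightarrow>
     (\<forall>x y t. t \<in> {-1..<0} \<longrightarrow> f y \<le> t \<longrightarrow> in_e_or_ck k f (m x y) t) \<and>
     (\<forall>x y z t r. t \<in> {-1..<0} \<longrightarrow> r \<in> {-1..<0} \<longrightarrow> f x \<le> t \<longrightarrow> f y \<le> r \<longrightarrow>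
        in_e_or_ck k f (m (m x (m y z)) z) (max t r))"

text \<open>[f]_t as in the statement (note: non-strict inequality in the second part).\<close>
definition level_set :: "real \<Rightarrow> ('a \<Rightarrow> real) \<Rightarrow> real \<Rightarrow> 'a set" where
  "level_set k f t = {x. f x \<le> t} \<union> {x. f x + t + k + 1 \<le> 0}"

end

theory Submission
  imports Defs
begin

text \<open>Both conditions are closure properties of the sets C_a = {v. v/a ([e] or [c_k]) f}, and
  every [f]_t is the union of the C_a it contains: a point w of [f]_t lies in C_a \<subseteq> [f]_t for
  a = t or a = -(t+k+1), unless [f]_t is everything. Hence the (e, e or c_k)-conditions make
  each [f]_t closed under the ideal operations. Conversely, a point w lying in [f]_s for all
  s \<in> [a, 0) lies in C_a: otherwise s = (a + f w)/2 separates w from [f]_s.\<close>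

lemma N_structure_le_0: "N_structure f \<Longrightarrow> f x \<le> 0"
  by (simp add: N_structure_def)

lemma mem_level_set_if_le: "f y \<le> t \<Longrightarrow> t \<le> s \<Longrightarrow> y \<in> level_set k f s"
  by (simp add: level_set_def)

lemma BE_ideal_UNIV: "BE_ideal m UNIV"
  by (simp add: BE_ideal_def)

lemma level_set_contains_e_or_ck_nbhd:
  assumes t: "t \<in> {-1..<0}" and "k \<le> 0" and "N_structure f"
    and w: "w \<in> level_set k f t" and ne: "level_set k f t \<noteq> UNIV"
  obtains a where "a \<in> {-1..<0}" "f w \<le> a" "\<And>v. in_e_or_ck k f v a \<Longrightarrow> v \<in> level_set k f t"
proof (cases "f w \<le> t")
  case True
  with t show ?thesis
    by (intro that[of t]) (auto simp: in_e_or_ck_def in_e_def in_ck_def level_set_def)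
next
  case False
  with w have w_ck: "f w + t + k + 1 \<le> 0" by (simp add: level_set_def)
  have "t + k + 1 > 0"
  proof (rule ccontr)
    assume "\<not> t + k + 1 > 0"
    then have "f v + t + k + 1 \<le> 0" for v
      using N_structure_le_0[OF \<open>N_structure f\<close>, of v] by linarith
    then have "level_set k f t = UNIV" by (auto simp: level_set_def)
    with ne show False ..
  qed
  with t \<open>k \<le> 0\<close> w_ck show ?thesis
    by (intro that[of "-(t + k + 1)"]) (auto simp: in_e_or_ck_def in_e_def in_ck_def level_set_def)
qed

lemma in_e_or_ck_if_in_upper_level_sets:
  assumes a: "a \<in> {-1..<0}" and "N_structure f"
    and w: "\<And>s. s \<in> {a..<0} \<Longrightarrow> w \<in> level_set k f s"
  shows "in_e_or_ck k f w a"
proof (rule ccontr)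
  assume "\<not> in_e_or_ck k f w a"
  then have above: "a < f w" "0 \<le> f w + a + k + 1"
    by (auto simp: in_e_or_ck_def in_e_def in_ck_def)
  define s where "s = (a + f w) / 2"
  have "s \<in> {a..<0}"
    using above N_structure_le_0[OF \<open>N_structure f\<close>, of w] by (simp add: s_def)
  then have "w \<in> level_set k f s" by (rule w)
  with above show False by (auto simp: level_set_def s_def field_simps)
qed

lemma level_sets_ideal_if_e_eck_ideal:
  assumes "e_eck_ideal m k f" and "k \<le> 0" and "N_structure f" and t: "t \<in> {-1..<0}"
  shows "level_set k f t = {} \<or> BE_ideal m (level_set k f t)"
proof (cases "level_set k f t = UNIV")
  case True
  then show ?thesis by (simp add: BE_ideal_UNIV)
next
  case False
  let ?L = "level_set k f t"
  note nbhd = level_set_contains_e_or_ck_nbhd[OF t \<open>k \<le> 0\<close> \<open>N_structure f\<close> _ False]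
  have "m x s \<in> ?L" if "s \<in> ?L" for x s
  proof -
    obtain a where "a \<in> {-1..<0}" "f s \<le> a" "\<And>v. in_e_or_ck k f v a \<Longrightarrow> v \<in> ?L"
      using nbhd[OF \<open>s \<in> ?L\<close>] by blast
    with \<open>e_eck_ideal m k f\<close> show ?thesis by (auto simp: e_eck_ideal_def)
  qed
  moreover have "m (m s (m q x)) x \<in> ?L" if "s \<in> ?L" "q \<in> ?L" for x s q
  proof -
    obtain a where a: "a \<in> {-1..<0}" "f s \<le> a" "\<And>v. in_e_or_ck k f v a \<Longrightarrow> v \<in> ?L"
      using nbhd[OF \<open>s \<in> ?L\<close>] by blast
    obtain b where b: "b \<in> {-1..<0}" "f q \<le> b" "\<And>v. in_e_or_ck k f v b \<Longrightarrow> v \<in> ?L"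
      using nbhd[OF \<open>q \<in> ?L\<close>] by blast
    have "in_e_or_ck k f (m (m s (m q x)) x) (max a b)"
      using \<open>e_eck_ideal m k f\<close> a(1,2) b(1,2) by (simp add: e_eck_ideal_def)
    then show ?thesis
      using a(3) b(3) by (cases "a \<le> b") (simp_all add: max_def)
  qed
  ultimately show ?thesis by (auto simp: BE_ideal_def)
qed

lemma e_eck_ideal_if_level_sets_ideal:
  assumes ideal: "\<forall>t \<in> {-1..<0}. level_set k f t = {} \<or> BE_ideal m (level_set k f t)"
    and "N_structure f"
  shows "e_eck_ideal m k f"
proof -
  have ideal_at: "BE_ideal m (level_set k f s)" if "s \<in> {a..<0}" "a \<in> {-1..<0}" "f y \<le> a"
    for s a y
    using ideal that mem_level_set_if_le[of f y a s k] by auto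
  show ?thesis
    unfolding e_eck_ideal_def
  proof (intro conjI allI impI)
    fix x y t
    assume t: "t \<in> {-1..<0}" and y: "f y \<le> t"
    show "in_e_or_ck k f (m x y) t"
    proof (rule in_e_or_ck_if_in_upper_level_sets[OF t \<open>N_structure f\<close>])
      fix s assume s: "s \<in> {t..<0}"
      then have "y \<in> level_set k f s"
        using y by (auto intro: mem_level_set_if_le)
      with ideal_at[OF s t y] show "m x y \<in> level_set k f s"
        by (simp add: BE_ideal_def)
    qed
  next
    fix x y z t r
    assume t: "t \<in> {-1..<0}" and r: "r \<in> {-1..<0}" and x: "f x \<le> t" and y: "f y \<le> r"
    have max: "max t r \<in> {-1..<0}" using t r by auto
    show "in_e_or_ck k f (m (m x (m y z)) z) (max t r)"
    proof (rule in_e_or_ck_if_in_upper_level_sets[OF max \<open>N_structure f\<close>])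
      fix s assume s: "s \<in> {max t r..<0}"
      have "x \<in> level_set k f s" "y \<in> level_set k f s"
        using s x y by (auto intro: mem_level_set_if_le)
      moreover have "BE_ideal m (level_set k f s)"
        using ideal_at[OF s max, of x] x by (simp add: le_max_iff_disj)
      ultimately show "m (m x (m y z)) z \<in> level_set k f s"
        by (simp add: BE_ideal_def)
    qed
  qed
qed

theorem mainTheorem12:
  fixes m :: "'a \<Rightarrow> 'a \<Rightarrow> 'a" and one :: 'a and k :: real and f :: "'a \<Rightarrow> real"
  assumes "transitive_BE m one"
    and "k \<in> {-1<..0}"
    and "N_structure f"
  shows "e_eck_ideal m k f \<longleftrightarrow>
           (\<forall>t \<in> {-1..<0}. level_set k f t = {} \<or> BE_ideal m (level_set k f t))"
proof
  assume "e_eck_ideal m k f"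
  then show "\<forall>t \<in> {-1..<0}. level_set k f t = {} \<or> BE_ideal m (level_set k f t)"
    using level_sets_ideal_if_e_eck_ideal[of m k f] assms(2,3) by simp
next
  assume "\<forall>t \<in> {-1..<0}. level_set k f t = {} \<or> BE_ideal m (level_set k f t)"
  then show "e_eck_ideal m k f"
    using assms(3) by (rule e_eck_ideal_if_level_sets_ideal)
qed

end
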